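(* Let $(V,\{A,B\})$ be a forking problem with a monotonic profile. The assignments returned by $R_A$ and $R_B$ (described in the context) coincide if and only if the profile admits a unique stable assignment.
   Context: Agents $V=\{v_1,\dots,v_n\}$; two alternatives $A,B$. Each agent $v_i$ has a strict total order $\succ_i$ on $\{A,B\}\times\{1,\dots,n\}$, where $(S,j)$ means being in the community adopting $S$ of size $j$; it is monotonic if $(S,j)\succ_i(S,k)$ whenever $k<j$. An assignment is a map $f:V\to\{A,B\}$; $v_i$ prefers $f$ to $g$ if $(f(v_i),|f^{-1}(f(v_i))|)\succ_i(g(v_i),|g^{-1}(g(v_i))|)$. An assignment $f$ is stable if there is no assignment $f'\neq f$ such that every agent $v_i$ with $f'(v_i)\neq f(v_i)$ prefers $f'$ to $f$. Algorithm $R_A$: set $V_A=V$, $V_B=\emptyset$, $a=|V_A|$, $b=|V_B|$. Repeat: let $k$ be the largest $j\in\{1,\dots,a\}$ with $|\{v_i\in V_A:(B,b+j)\succ_i(A,a)\}|\ge j$, or $k=0$ if none exists. If $k=0$, output $f$ with $f^{-1}(A)=V_A$, $f^{-1}(B)=V_B$. Otherwise let $X=\{v_i\in V_A:(B,b+k)\succ_i(A,a)\}$, move $X$ from $V_A$ to $V_B$, update $a,b$, and repeat. Algorithm $R_B$ is the same with the roles of $A$ and $B$ exchanged (it starts with all agents at $B$ and moves groups to $A$). *)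

theory Defs
  imports Main "HOL-Library.While_Combinator"
begin

text \<open>The set of agents V is the
universe of a finite type 'v, so n = card (UNIV :: 'v set). A profile assigns to every
agent v a relation pref v, where ((S,j),(T,k)) in pref v means
(S,j) is strictly preferred to (T,k) by v.\<close>

datatype alt = A | B

fun other :: "alt \<Rightarrow> alt" where
  "other A = B" | "other B = A"

type_synonym 'v profile = "'v \<Rightarrow> ((alt \<times> nat) \<times> (alt \<times> nat)) set"

definition outcomes :: "nat \<Rightarrow> (alt \<times> nat) set" where
  "outcomes n = UNIV \<times> {1..n}"

definition is_profile :: "'v::finite profile \<Rightarrow> bool" where
  "is_profile pref \<longleftrightarrow>
     (\<forall>v. strict_linear_order_on (outcomes (card (UNIV :: 'v set))) (pref v)
          \<and> pref v \<subseteq> outcomes (card (UNIV :: 'v set)) \<times> outcomes (card (UNIV :: 'v set)))"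

definition monotonic :: "'v::finite profile \<Rightarrow> bool" where
  "monotonic pref \<longleftrightarrow>
     (\<forall>v S j k. 1 \<le> k \<and> k < j \<and> j \<le> card (UNIV :: 'v set) \<longrightarrow> ((S, j), (S, k)) \<in> pref v)"

definition comm_size :: "('v \<Rightarrow> alt) \<Rightarrow> 'v \<Rightarrow> nat" where
  "comm_size f v = card {u. f u = f v}"

definition prefers :: "'v profile \<Rightarrow> 'v \<Rightarrow> ('v \<Rightarrow> alt) \<Rightarrow> ('v \<Rightarrow> alt) \<Rightarrow> bool" where
  "prefers pref v f g \<longleftrightarrow> ((f v, comm_size f v), (g v, comm_size g v)) \<in> pref v"

definition stable :: "'v profile \<Rightarrow> ('v \<Rightarrow> alt) \<Rightarrow> bool" where
  "stable pref f \<longleftrightarrow>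
     \<not> (\<exists>f'. f' \<noteq> f \<and> (\<forall>v. f' v \<noteq> f v \<longrightarrow> prefers pref v f' f))"

text \<open>Algorithm R_S (S = A gives R_A, S = B gives R_B). The state is the set VS
of agents currently at S; the agents at other S are the rest. a = |VS|, b = n - a.\<close>

definition willing :: "'v::finite profile \<Rightarrow> alt \<Rightarrow> 'v set \<Rightarrow> nat \<Rightarrow> 'v set" where
  "willing pref S VS j =
     {v \<in> VS. ((other S, (card (UNIV :: 'v set) - card VS) + j), (S, card VS)) \<in> pref v}"

definition kval :: "'v::finite profile \<Rightarrow> alt \<Rightarrow> 'v set \<Rightarrow> nat" where
  "kval pref S VS =
     (if \<exists>j\<in>{1..card VS}. card (willing pref S VS j) \<ge> j
      then Max {j\<in>{1..card VS}. card (willing pref S VS j) \<ge> j}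
      else 0)"

definition R_step :: "'v::finite profile \<Rightarrow> alt \<Rightarrow> 'v set \<Rightarrow> 'v set" where
  "R_step pref S VS = VS - willing pref S VS (kval pref S VS)"

definition R_final :: "'v::finite profile \<Rightarrow> alt \<Rightarrow> 'v set" where
  "R_final pref S =
     the (while_option (\<lambda>VS. kval pref S VS \<noteq> 0) (R_step pref S) UNIV)"

definition R_alg :: "'v::finite profile \<Rightarrow> alt \<Rightarrow> ('v \<Rightarrow> alt)" where
  "R_alg pref S = (\<lambda>v. if v \<in> R_final pref S then S else other S)"

end

theory Submission
  imports Defs
begin

(* R_S moves a group of k agents away from S only if each of them prefers the other
   alternative, whose community then has size b + k, to staying at S. By monotonicity the
   S-agents of a stable assignment inside such a group would deviate together, so a stable
   assignment never loses an S-agent to R_S. Conversely the output of R_S is stable: the agents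
   still at S admit no willing group, and every group of agents that left S contains one who
   would not return. Hence, if R_A and R_B agree, any stable assignment agrees with their
   common output on its A-agents and on its B-agents. *)

lemma other_neq [simp]: "other S \<noteq> S" "S \<noteq> other S"
  by (cases S; simp)+

lemma other_other [simp]: "other (other S) = S"
  by (cases S) auto

lemma eq_other_iff: "x = other S \<longleftrightarrow> x \<noteq> S"
  by (cases x; cases S) auto

lemma other_eq_iff: "other S = x \<longleftrightarrow> x \<noteq> S"
  by (cases x; cases S) auto

lemma card_Compl: "card (- (X :: 'v::finite set)) = card (UNIV :: 'v set) - card X"
  by (metis Compl_eq_Diff_UNIV card_Diff_subset finite subset_UNIV)

lemma pref_outcomesD:
  fixes pref :: "'v::finite profile"
  assumes "is_profile pref" and "(x, y) \<in> pref v"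
  shows "snd x \<in> {1..card (UNIV :: 'v set)}" "snd y \<in> {1..card (UNIV :: 'v set)}"
proof -
  have "(x, y) \<in> outcomes (card (UNIV :: 'v set)) \<times> outcomes (card (UNIV :: 'v set))"
    using assms unfolding is_profile_def by blast
  then show "snd x \<in> {1..card (UNIV :: 'v set)}" "snd y \<in> {1..card (UNIV :: 'v set)}"
    unfolding outcomes_def by auto
qed

lemma pref_trans: "is_profile pref \<Longrightarrow> (x, y) \<in> pref v \<Longrightarrow> (y, z) \<in> pref v \<Longrightarrow> (x, z) \<in> pref v"
  unfolding is_profile_def strict_linear_order_on_def trans_def by blast

lemma pref_irrefl: "is_profile pref \<Longrightarrow> (x, x) \<notin> pref v"
  unfolding is_profile_def strict_linear_order_on_def irrefl_def by blast

lemma pref_grow_left: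
  fixes pref :: "'v::finite profile"
  assumes "is_profile pref" "monotonic pref"
    and "((S, k), y) \<in> pref v" "k \<le> j" "j \<le> card (UNIV :: 'v set)"
  shows "((S, j), y) \<in> pref v"
proof (cases "k = j")
  case False
  have "1 \<le> k"
    using pref_outcomesD(1)[OF assms(1,3)] by simp
  with assms False have "((S, j), (S, k)) \<in> pref v"
    unfolding monotonic_def by simp
  then show ?thesis using assms(3) by (rule pref_trans[OF assms(1)])
qed (use assms in simp)

lemma pref_shrink_right:
  fixes pref :: "'v::finite profile"
  assumes "is_profile pref" "monotonic pref"
    and "(x, (S, k)) \<in> pref v" "j \<le> k" "1 \<le> j"
  shows "(x, (S, j)) \<in> pref v"
proof (cases "k = j")
  case False
  have "k \<le> card (UNIV :: 'v set)"
    using pref_outcomesD(2)[OF assms(1,3)] by simp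
  with assms False have "((S, k), (S, j)) \<in> pref v"
    unfolding monotonic_def by simp
  with assms(3) show ?thesis by (rule pref_trans[OF assms(1)])
qed (use assms in simp)

lemma willing_subset: "willing pref S VS j \<subseteq> VS"
  unfolding willing_def by auto

lemma kval_neq_0D:
  assumes "kval pref S VS \<noteq> 0"
  shows "kval pref S VS \<in> {1..card VS}" "kval pref S VS \<le> card (willing pref S VS (kval pref S VS))"
proof -
  let ?J = "{j \<in> {1..card VS}. j \<le> card (willing pref S VS j)}"
  have "?J \<noteq> {}"
    using assms unfolding kval_def by (auto split: if_splits)
  then have "Max ?J \<in> ?J" by (intro Max_in) auto
  moreover have "kval pref S VS = Max ?J"
    using \<open>?J \<noteq> {}\<close> unfolding kval_def by auto
  ultimately show "kval pref S VS \<in> {1..card VS}" "kval pref S VS \<le> card (willing pref S VS (kval pref S VS))"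
    by auto
qed

lemma kval_eq_0D:
  assumes "kval pref S VS = 0" "j \<in> {1..card VS}"
  shows "card (willing pref S VS j) < j"
proof (rule ccontr)
  let ?J = "{j \<in> {1..card VS}. j \<le> card (willing pref S VS j)}"
  assume "\<not> card (willing pref S VS j) < j"
  with assms(2) have "j \<in> ?J" by auto
  then have "j \<le> Max ?J" by (intro Max_ge) auto
  moreover have "kval pref S VS = Max ?J"
    using \<open>j \<in> ?J\<close> unfolding kval_def by auto
  ultimately show False using assms by auto
qed

lemma card_R_step_less:
  assumes "kval pref S VS \<noteq> 0"
  shows "card (R_step pref S VS) < card (VS :: 'v::finite set)"
proof -
  have "willing pref S VS (kval pref S VS) \<noteq> {}"
    using kval_neq_0D[OF assms] by auto
  then have "R_step pref S VS \<subset> VS"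
    using willing_subset unfolding R_step_def by blast
  then show ?thesis by (intro psubset_card_mono) auto
qed

lemma while_option_R_step:
  "while_option (\<lambda>VS. kval pref S VS \<noteq> 0) (R_step pref S) UNIV = Some (R_final pref S)"
proof -
  have "wf {(T, VS). kval pref S VS \<noteq> 0 \<and> T = R_step pref S VS}"
    by (rule wf_subset[OF wf_measure[of card]]) (auto simp: card_R_step_less)
  then obtain T where "while_option (\<lambda>VS. kval pref S VS \<noteq> 0) (R_step pref S) UNIV = Some T"
    using wf_while_option_Some[of "\<lambda>_. True"] by fastforce
  then show ?thesis unfolding R_final_def by simp
qed

lemma kval_R_final: "kval pref S (R_final pref S) = 0"
  using while_option_stop[OF while_option_R_step] by simp

lemma R_final_induct:
  assumes "P UNIV" and "\<And>VS. P VS \<Longrightarrow> kval pref S VS \<noteq> 0 \<Longrightarrow> P (R_step pref S VS)"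
  shows "P (R_final pref S)"
  using while_option_rule[OF _ while_option_R_step] assms by blast

definition flip :: "'v set \<Rightarrow> ('v \<Rightarrow> alt) \<Rightarrow> 'v \<Rightarrow> alt" where
  "flip D f = (\<lambda>u. if u \<in> D then other (f u) else f u)"

definition assign :: "alt \<Rightarrow> 'v set \<Rightarrow> 'v \<Rightarrow> alt" where
  "assign S VS = (\<lambda>u. if u \<in> VS then S else other S)"

lemma flip_neq_iff: "flip D f u \<noteq> f u \<longleftrightarrow> u \<in> D"
  unfolding flip_def by simp

lemma stable_iff_flip:
  fixes f :: "'v \<Rightarrow> alt"
  shows "stable pref f \<longleftrightarrow> (\<forall>D. D \<noteq> {} \<longrightarrow> (\<exists>v\<in>D. \<not> prefers pref v (flip D f) f))"
proof
  assume st: "stable pref f"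
  show "\<forall>D. D \<noteq> {} \<longrightarrow> (\<exists>v\<in>D. \<not> prefers pref v (flip D f) f)"
  proof (intro allI impI)
    fix D :: "'v set" assume "D \<noteq> {}"
    then obtain v where "v \<in> D" by blast
    then have "flip D f \<noteq> f" by (metis flip_neq_iff)
    then obtain u where "flip D f u \<noteq> f u" "\<not> prefers pref u (flip D f) f"
      using st unfolding stable_def by blast
    then show "\<exists>v\<in>D. \<not> prefers pref v (flip D f) f"
      by (auto simp: flip_neq_iff)
  qed
next
  assume flips: "\<forall>D. D \<noteq> {} \<longrightarrow> (\<exists>v\<in>D. \<not> prefers pref v (flip D f) f)"
  show "stable pref f" unfolding stable_def
  proof
    assume "\<exists>f'. f' \<noteq> f \<and> (\<forall>v. f' v \<noteq> f v \<longrightarrow> prefers pref v f' f)"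
    then obtain f' where "f' \<noteq> f" and dev: "\<And>v. f' v \<noteq> f v \<Longrightarrow> prefers pref v f' f" by blast
    define D where "D = {v. f' v \<noteq> f v}"
    have "flip D f = f'" unfolding D_def flip_def by (auto simp: other_eq_iff)
    moreover have "D \<noteq> {}" using \<open>f' \<noteq> f\<close> unfolding D_def by auto
    ultimately obtain v where "v \<in> D" "\<not> prefers pref v f' f"
      using flips by metis
    then show False using dev unfolding D_def by blast
  qed
qed

lemma comm_size_flip:
  fixes f :: "'v::finite \<Rightarrow> alt"
  assumes "v \<in> D"
  shows "comm_size (flip D f) v
    = card {u. f u \<noteq> f v} - card {u \<in> D. f u \<noteq> f v} + card {u \<in> D. f u = f v}"
proof -
  have "{u. flip D f u = flip D f v} = ({u. f u \<noteq> f v} - D) \<union> {u \<in> D. f u = f v}"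
    using assms unfolding flip_def by (auto simp: eq_other_iff other_eq_iff)
  then have "comm_size (flip D f) v = card ({u. f u \<noteq> f v} - D) + card {u \<in> D. f u = f v}"
    unfolding comm_size_def by (simp add: card_Un_disjoint disjoint_iff)
  moreover have "card ({u. f u \<noteq> f v} - D) = card {u. f u \<noteq> f v} - card {u \<in> D. f u \<noteq> f v}"
    by (simp add: card_Diff_subset_Int Collect_conj_eq Int_commute)
  ultimately show ?thesis by simp
qed

lemma comm_size_flip_assign:
  fixes VS :: "'v::finite set"
  assumes "v \<in> D"
  shows "comm_size (flip D (assign S VS)) v
    = (if v \<in> VS then card (UNIV :: 'v set) - card VS - card (D - VS) + card (D \<inter> VS)
       else card VS - card (D \<inter> VS) + card (D - VS))"
proof (cases "v \<in> VS")
  case True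
  have "{u. assign S VS u \<noteq> assign S VS v} = - VS"
    "{u \<in> D. assign S VS u \<noteq> assign S VS v} = D - VS"
    "{u \<in> D. assign S VS u = assign S VS v} = D \<inter> VS"
    using True unfolding assign_def by auto
  with True show ?thesis
    unfolding comm_size_flip[OF assms] by (simp add: card_Compl)
next
  case False
  have "{u. assign S VS u \<noteq> assign S VS v} = VS"
    "{u \<in> D. assign S VS u \<noteq> assign S VS v} = D \<inter> VS"
    "{u \<in> D. assign S VS u = assign S VS v} = D - VS"
    using False unfolding assign_def by auto
  with False show ?thesis
    unfolding comm_size_flip[OF assms] by simp
qed

lemma prefers_flip_assign_iff:
  fixes VS :: "'v::finite set"
  assumes "v \<in> D"
  shows "prefers pref v (flip D (assign S VS)) (assign S VS) \<longleftrightarrow>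
    (if v \<in> VS
     then ((other S, card (UNIV :: 'v set) - card VS - card (D - VS) + card (D \<inter> VS)), (S, card VS))
            \<in> pref v
     else ((S, card VS - card (D \<inter> VS) + card (D - VS)), (other S, card (UNIV :: 'v set) - card VS))
            \<in> pref v)"
proof -
  have "flip D (assign S VS) v = (if v \<in> VS then other S else S)"
    "assign S VS v = (if v \<in> VS then S else other S)"
    using assms by (simp_all add: flip_def assign_def)
  moreover have "comm_size (assign S VS) v = (if v \<in> VS then card VS else card (UNIV :: 'v set) - card VS)"
    unfolding comm_size_def assign_def by (simp add: Compl_eq[symmetric] card_Compl)
  ultimately show ?thesis
    unfolding prefers_def comm_size_flip_assign[OF assms] by simp
qed

subsection \<open>R_S returns a stable assignment\<close>

text \<open>Loop invariant of R_S: every group of agents that have left S contains one who prefers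
  its current community to returning to S together with the group.\<close>

definition return_blocked :: "'v::finite profile \<Rightarrow> alt \<Rightarrow> 'v set \<Rightarrow> bool" where
  "return_blocked pref S VS \<longleftrightarrow>
     (\<forall>D \<subseteq> - VS. D \<noteq> {} \<longrightarrow>
        (\<exists>v\<in>D. ((other S, card (UNIV :: 'v set) - card VS), (S, card VS + card D)) \<in> pref v))"

context
  fixes pref :: "'v::finite profile"
  assumes profile: "is_profile pref" and mono: "monotonic pref"
begin

lemma return_blocked_R_step:
  assumes blocked: "return_blocked pref S VS" and k: "kval pref S VS \<noteq> 0"
  shows "return_blocked pref S (R_step pref S VS)"
  unfolding return_blocked_def
proof (intro allI impI)
  let ?n = "card (UNIV :: 'v set)" and ?k = "kval pref S VS"
  let ?W = "willing pref S VS ?k" and ?VS' = "R_step pref S VS"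
  fix D assume D: "D \<subseteq> - ?VS'" "D \<noteq> {}"
  then have "1 \<le> card D" by (simp add: Suc_le_eq card_gt_0_iff)
  have W: "?W \<subseteq> VS" by (rule willing_subset)
  then have card_W: "?k \<le> card ?W" "card ?W \<le> card VS" "card VS \<le> ?n"
    using kval_neq_0D[OF k] by (simp_all add: card_mono)
  have card_VS': "card ?VS' = card VS - card ?W"
    unfolding R_step_def using W by (simp add: card_Diff_subset)
  show "\<exists>v\<in>D. ((other S, ?n - card ?VS'), (S, card ?VS' + card D)) \<in> pref v"
  proof (cases "D \<subseteq> VS")
    case True
    then have "D \<subseteq> ?W" using D(1) unfolding R_step_def by auto
    with D(2) obtain v where "v \<in> D" "v \<in> ?W" by blast
    then have "((other S, ?n - card VS + ?k), (S, card VS)) \<in> pref v"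
      unfolding willing_def by simp
    then have "((other S, ?n - card ?VS'), (S, card VS)) \<in> pref v"
      by (rule pref_grow_left[OF profile mono]) (use card_W card_VS' in auto)
    moreover have "card D \<le> card ?W" using \<open>D \<subseteq> ?W\<close> by (simp add: card_mono)
    ultimately have "((other S, ?n - card ?VS'), (S, card ?VS' + card D)) \<in> pref v"
      by (elim pref_shrink_right[OF profile mono]) (use \<open>1 \<le> card D\<close> card_W card_VS' in auto)
    with \<open>v \<in> D\<close> show ?thesis by blast
  next
    case False
    then have "D - VS \<subseteq> - VS" "D - VS \<noteq> {}" by auto
    with blocked obtain v where v: "v \<in> D - VS"
      "((other S, ?n - card VS), (S, card VS + card (D - VS))) \<in> pref v"
      unfolding return_blocked_def by blast
    have "D \<inter> VS \<subseteq> ?W" using D(1) unfolding R_step_def by auto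
    then have "card (D \<inter> VS) \<le> card ?W" by (simp add: card_mono)
    then have "card D \<le> card (D - VS) + card ?W"
      using card_Int_Diff[of D VS] by simp
    have "((other S, ?n - card ?VS'), (S, card VS + card (D - VS))) \<in> pref v"
      by (rule pref_grow_left[OF profile mono v(2)]) (use card_W card_VS' in auto)
    then have "((other S, ?n - card ?VS'), (S, card ?VS' + card D)) \<in> pref v"
      by (rule pref_shrink_right[OF profile mono])
        (use \<open>card D \<le> card (D - VS) + card ?W\<close> \<open>1 \<le> card D\<close> card_W card_VS' in auto)
    with v(1) show ?thesis by blast
  qed
qed

lemma flip_assign_rejected_in_VS:
  assumes kval: "kval pref S VS = 0" and "D \<inter> VS \<noteq> {}"
  shows "\<exists>v \<in> D \<inter> VS. \<not> prefers pref v (flip D (assign S VS)) (assign S VS)"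
proof (rule ccontr)
  let ?n = "card (UNIV :: 'v set)" and ?DS = "D \<inter> VS" and ?DO = "D - VS"
  assume "\<not> ?thesis"
  then have deviate: "prefers pref v (flip D (assign S VS)) (assign S VS)" if "v \<in> ?DS" for v
    using that by blast
  have card_DS: "card ?DS \<le> card VS" "card VS \<le> ?n" by (simp_all add: card_mono)
  have "?DS \<subseteq> willing pref S VS (card ?DS)"
  proof
    fix v assume v: "v \<in> ?DS"
    then have "((other S, ?n - card VS - card ?DO + card ?DS), (S, card VS)) \<in> pref v"
      using deviate[OF v] prefers_flip_assign_iff[of v D] by simp
    then have "((other S, ?n - card VS + card ?DS), (S, card VS)) \<in> pref v"
      by (rule pref_grow_left[OF profile mono]) (use card_DS in auto)
    with v show "v \<in> willing pref S VS (card ?DS)"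
      unfolding willing_def by simp
  qed
  then have "card ?DS \<le> card (willing pref S VS (card ?DS))" by (simp add: card_mono)
  moreover have "card ?DS \<in> {1..card VS}"
    using assms(2) card_DS by (simp add: Suc_le_eq card_gt_0_iff)
  ultimately show False using kval_eq_0D[OF kval] by fastforce
qed

lemma flip_assign_rejected_out_VS:
  assumes blocked: "return_blocked pref S VS" and "D - VS \<noteq> {}"
  shows "\<exists>v \<in> D - VS. \<not> prefers pref v (flip D (assign S VS)) (assign S VS)"
proof -
  let ?n = "card (UNIV :: 'v set)"
  have "D - VS \<subseteq> - VS" by blast
  with assms obtain v where v: "v \<in> D - VS"
    "((other S, ?n - card VS), (S, card VS + card (D - VS))) \<in> pref v"
    unfolding return_blocked_def by blast
  have "card (D - VS) \<le> card (- VS)" "card VS \<le> ?n" by (auto intro: card_mono)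
  then have bound: "card VS + card (D - VS) \<le> ?n" by (simp add: card_Compl)
  have "\<not> prefers pref v (flip D (assign S VS)) (assign S VS)"
  proof
    assume "prefers pref v (flip D (assign S VS)) (assign S VS)"
    then have "((S, card VS - card (D \<inter> VS) + card (D - VS)), (other S, ?n - card VS)) \<in> pref v"
      using v(1) prefers_flip_assign_iff[of v D] by simp
    then have "((S, card VS + card (D - VS)), (other S, ?n - card VS)) \<in> pref v"
      by (rule pref_grow_left[OF profile mono]) (use bound in auto)
    with v(2) have "((other S, ?n - card VS), (other S, ?n - card VS)) \<in> pref v"
      by (rule pref_trans[OF profile])
    then show False using pref_irrefl[OF profile] by simp
  qed
  with v(1) show ?thesis by blast
qed

lemma stable_assign:
  assumes "kval pref S VS = 0" and "return_blocked pref S VS"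
  shows "stable pref (assign S VS)"
  unfolding stable_iff_flip
proof (intro allI impI)
  fix D :: "'v set" assume "D \<noteq> {}"
  then consider "D \<inter> VS \<noteq> {}" | "D - VS \<noteq> {}" by blast
  then show "\<exists>v\<in>D. \<not> prefers pref v (flip D (assign S VS)) (assign S VS)"
    using flip_assign_rejected_in_VS[OF assms(1)] flip_assign_rejected_out_VS[OF assms(2)]
    by cases blast+
qed

lemma R_alg_stable: "stable pref (R_alg pref S)"
proof -
  have "return_blocked pref S UNIV" unfolding return_blocked_def by simp
  then have "return_blocked pref S (R_final pref S)"
    by (rule R_final_induct[where P = "return_blocked pref S", OF _ return_blocked_R_step])
  then have "stable pref (assign S (R_final pref S))"
    using stable_assign kval_R_final by blast
  then show ?thesis unfolding R_alg_def assign_def .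
qed

subsection \<open>R_S keeps the S-community of every stable assignment\<close>

lemma stable_community_subset_R_step:
  assumes stable: "stable pref g" and sub: "{v. g v = S} \<subseteq> VS" and k: "kval pref S VS \<noteq> 0"
  shows "{v. g v = S} \<subseteq> R_step pref S VS"
proof (rule ccontr)
  let ?n = "card (UNIV :: 'v set)" and ?k = "kval pref S VS"
  let ?W = "willing pref S VS ?k" and ?X = "{v. g v = S}"
  let ?Y = "?W \<inter> ?X"
  assume "\<not> ?X \<subseteq> R_step pref S VS"
  then have "?Y \<noteq> {}" using sub unfolding R_step_def by auto
  then obtain v where v: "v \<in> ?Y" "\<not> prefers pref v (flip ?Y g) g"
    using stable[unfolded stable_iff_flip, rule_format, of ?Y] by blast
  then have "g v = S" by simp
  then have "{u. g u \<noteq> g v} = - ?X" "{u \<in> ?Y. g u \<noteq> g v} = {}" "{u \<in> ?Y. g u = g v} = ?Y"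
    by auto
  then have "comm_size (flip ?Y g) v = card (- ?X) - card ({} :: 'v set) + card ?Y"
    by (simp only: comm_size_flip[OF v(1)])
  then have size_flip: "comm_size (flip ?Y g) v = ?n - card ?X + card ?Y"
    by (simp add: card_Compl)
  \<comment> \<open>Y gains at least as large a community as the one offered to the willing group W.\<close>
  have "card ?W = card ?Y + card (?W - ?X)" by (rule card_Int_Diff) simp
  moreover have "card (?W - ?X) \<le> card (VS - ?X)"
    using willing_subset[of pref S VS ?k] by (intro card_mono) auto
  moreover have "card (VS - ?X) = card VS - card ?X" using sub by (simp add: card_Diff_subset)
  moreover have "?k \<le> card ?W" using kval_neq_0D[OF k] by simp
  moreover have "card ?X \<le> card VS" "card VS \<le> ?n" "card ?Y \<le> card ?X"
    using sub by (simp_all add: card_mono)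
  moreover have "1 \<le> card ?Y" using \<open>?Y \<noteq> {}\<close> by (simp add: Suc_le_eq card_gt_0_iff)
  ultimately have bounds: "?n - card VS + ?k \<le> ?n - card ?X + card ?Y" "?n - card ?X + card ?Y \<le> ?n"
    "card ?X \<le> card VS" "1 \<le> card ?X"
    by linarith+
  have "((other S, ?n - card VS + ?k), (S, card VS)) \<in> pref v"
    using v(1) unfolding willing_def by simp
  then have "((other S, ?n - card ?X + card ?Y), (S, card VS)) \<in> pref v"
    by (rule pref_grow_left[OF profile mono]) (use bounds in auto)
  then have "((other S, ?n - card ?X + card ?Y), (S, card ?X)) \<in> pref v"
    by (rule pref_shrink_right[OF profile mono]) (use bounds in auto)
  moreover have "flip ?Y g v = other S" "comm_size g v = card ?X"
    using v(1) \<open>g v = S\<close> unfolding flip_def comm_size_def by auto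
  ultimately have "prefers pref v (flip ?Y g) g"
    unfolding prefers_def size_flip using \<open>g v = S\<close> by simp
  with v(2) show False by contradiction
qed

lemma stable_community_subset_R_final:
  assumes "stable pref g"
  shows "{v. g v = S} \<subseteq> R_final pref S"
  by (rule R_final_induct[where P = "\<lambda>VS. {v. g v = S} \<subseteq> VS"])
    (use stable_community_subset_R_step[OF assms] in auto)

lemma R_alg_eq_if_stable:
  assumes "stable pref g"
  shows "R_alg pref (g v) v = g v"
  using stable_community_subset_R_final[OF assms, of "g v"] unfolding R_alg_def by auto

end

theorem theorem2:
  fixes pref :: "'v::finite profile"
  assumes "is_profile pref"
    and "monotonic pref"
  shows "R_alg pref A = R_alg pref B \<longleftrightarrow> (\<exists>!f. stable pref f)"
proof
  assume same: "R_alg pref A = R_alg pref B"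
  have "g = R_alg pref A" if "stable pref g" for g
  proof
    fix v
    have "R_alg pref (g v) = R_alg pref A" using same by (cases "g v") simp_all
    then show "g v = R_alg pref A v"
      using R_alg_eq_if_stable[OF assms that, of v] by simp
  qed
  then show "\<exists>!f. stable pref f"
    using R_alg_stable[OF assms, of A] by blast
next
  assume "\<exists>!f. stable pref f"
  then show "R_alg pref A = R_alg pref B"
    using R_alg_stable[OF assms] by blast
qed

end
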